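(* Let $m,n$ be positive integers and $x\ge 2$ real. Define $\alpha_j\ge 0$ ($1\le j\le n$) and $\beta_k\ge0$ ($1\le k\le m$) by $$\cosh\alpha_j+\cos\frac{\pi(j-\frac12)}{n}=x=\cosh\beta_k+\cos\frac{\pi(k-\frac12)}{m}.$$ Then $$\prod_{j=1}^n 2\cosh(m\alpha_j)=\prod_{k=1}^m 2\cosh(n\beta_k).$$ *)

theory Defs
  imports "HOL-Analysis.Analysis"
begin

end

theory Submission
  imports Defs "HOL-Computational_Algebra.Polynomial"
begin

text \<open>Writing \<open>w = exp a\<close>, the roots of \<open>w^(2m) + 1\<close> are \<open>cis (\<pm>\<theta>\<^sub>k)\<close> with
  \<open>\<theta>\<^sub>k = \<pi>(k - 1/2)/m\<close>, and pairing conjugate roots gives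
  \<open>2 cosh (m a) = 2^m \<Prod>\<^sub>k (cosh a - cos \<theta>\<^sub>k)\<close>.  Substituting \<open>cosh \<alpha>\<^sub>j = x - cos \<phi>\<^sub>j\<close>
  turns the left-hand side of the theorem into \<open>2^(mn) \<Prod>\<^sub>j \<Prod>\<^sub>k (x - cos \<phi>\<^sub>j - cos \<theta>\<^sub>k)\<close>,
  which is symmetric in \<open>m\<close> and \<open>n\<close>.\<close>

lemma cis_odd_multiple_inj:
  assumes "N > 0" "j < N" "k < N"
    and "cis (pi * (2 * real j + 1) / real N) = cis (pi * (2 * real k + 1) / real N)"
  shows "j = k"
proof -
  have cis_shift: "cis (pi * (2 * real i + 1) / real N)
      = cis (pi / real N) * exp (2 * of_real pi * \<i> * of_nat i / of_nat N)" for i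
  proof -
    have "\<i> * complex_of_real (pi * (2 * real i + 1) / real N)
        = \<i> * complex_of_real (pi / real N) + 2 * of_real pi * \<i> * of_nat i / of_nat N"
      using assms(1) by (simp add: field_simps)
    thus ?thesis by (simp add: cis_conv_exp exp_add[symmetric])
  qed
  have "exp (2 * of_real pi * \<i> * of_nat j / of_nat N) = exp (2 * of_real pi * \<i> * of_nat k / of_nat N)"
    using assms(4) unfolding cis_shift by simp
  hence "j mod N = k mod N" using complex_root_unity_eq[of N j k] assms(1) by simp
  thus ?thesis using assms by simp
qed

lemma prod_cis_odd_roots:
  fixes z :: complex
  assumes "N > 0"
  shows "(\<Prod>j<N. z - cis (pi * (2 * real j + 1) / real N)) = z ^ N + 1"
proof -
  define \<zeta> where "\<zeta> j = cis (pi * (2 * real j + 1) / real N)" for j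
  define P where "P = (\<Prod>j<N. [:- \<zeta> j, 1:])"
  define Q :: "complex poly" where "Q = monom 1 N + 1"
  have root: "\<zeta> j ^ N = -1" for j
  proof -
    have "\<zeta> j ^ N = cis (pi * (2 * real j + 1))"
      using assms unfolding \<zeta>_def by (subst Complex.DeMoivre) simp
    also have "\<dots> = cis (2 * pi * real j + pi)" by (simp add: algebra_simps)
    also have "\<dots> = -1"
      by (simp add: cis_conv_exp exp_add distrib_left flip: exp_of_nat_mult) (simp add: exp_eq_polar)
    finally show ?thesis .
  qed
  have inj: "inj_on \<zeta> {..<N}"
    using cis_odd_multiple_inj[OF assms] by (auto simp: inj_on_def \<zeta>_def)
  have degree_P: "degree P = N"
    unfolding P_def by (simp add: degree_prod_eq_sum_degree)
  have "P = Q"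
  proof (rule poly_eqI_degree_lead_coeff[where n = N and A = "\<zeta> ` {..<N}"])
    show "coeff P N = coeff Q N"
      using degree_P lead_coeff_prod[of "\<lambda>j. [:- \<zeta> j, 1:]" "{..<N}"] assms
      unfolding P_def Q_def by (simp add: coeff_monom)
    show "N \<le> card (\<zeta> ` {..<N})" using card_image[OF inj] by simp
    show "degree P \<le> N" using degree_P by simp
    show "degree Q \<le> N" unfolding Q_def by (simp add: degree_add_le degree_monom_le)
    show "poly P z = poly Q z" if "z \<in> \<zeta> ` {..<N}" for z
      using that root by (auto simp: P_def Q_def poly_prod poly_monom)
  qed
  hence "poly P z = poly Q z" by simp
  thus ?thesis by (simp add: P_def Q_def poly_prod poly_monom \<zeta>_def)
qed

lemma conjugate_cis_pair_product:
  fixes z :: complex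
  shows "(z - cis t) * (z - cis (- t)) = z\<^sup>2 - 2 * z * cos t + 1"
  by (simp add: complex_eq_iff power2_eq_square algebra_simps sin_cos_squared_add3)

lemma power_double_plus_one_eq_prod:
  fixes z :: complex
  assumes "m > 0"
  shows "z ^ (2 * m) + 1 = (\<Prod>j<m. z\<^sup>2 - 2 * z * cos (pi * (real j + 1/2) / real m) + 1)"
proof -
  define \<theta> where "\<theta> j = pi * (real j + 1/2) / real m" for j
  define f where "f j = z - cis (pi * (2 * real j + 1) / real (2 * m))" for j
  have f_low: "f j = z - cis (\<theta> j)" for j
    unfolding f_def \<theta>_def using assms by (simp add: field_simps)
  have f_high: "f (2 * m - 1 - j) = z - cis (- \<theta> j)" if "j < m" for j
  proof -
    have "pi * (2 * real (2 * m - 1 - j) + 1) / real (2 * m) = - \<theta> j + 2 * pi"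
      using that assms by (simp add: \<theta>_def of_nat_diff field_simps)
    hence "cis (pi * (2 * real (2 * m - 1 - j) + 1) / real (2 * m)) = cis (- \<theta> j)"
      by (simp only: cis_mult[symmetric]) simp
    thus ?thesis by (simp add: f_def)
  qed
  have "z ^ (2 * m) + 1 = (\<Prod>j<2 * m. f j)"
    unfolding f_def using prod_cis_odd_roots[of "2 * m" z] assms by simp
  also have "\<dots> = (\<Prod>j<m. f j) * (\<Prod>j\<in>{m..<2 * m}. f j)"
    by (metis prod.atLeastLessThan_concat lessThan_atLeast0 mult_2 le_add1 zero_le)
  also have "(\<Prod>j\<in>{m..<2 * m}. f j) = (\<Prod>j<m. f (2 * m - 1 - j))"
    by (rule prod.reindex_bij_witness[where i = "\<lambda>j. 2 * m - 1 - j" and j = "\<lambda>j. 2 * m - 1 - j"]) auto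
  also have "(\<Prod>j<m. f j) * \<dots> = (\<Prod>j<m. f j * f (2 * m - 1 - j))"
    by (simp add: prod.distrib)
  also have "\<dots> = (\<Prod>j<m. z\<^sup>2 - 2 * z * cos (\<theta> j) + 1)"
    using f_low f_high conjugate_cis_pair_product by (intro prod.cong) auto
  finally show ?thesis by (simp add: \<theta>_def)
qed

lemma two_cosh_mult_eq_prod:
  assumes "m > 0"
  shows "2 * cosh (real m * a) = 2 ^ m * (\<Prod>k=1..m. cosh a - cos (pi * (real k - 1/2) / real m))"
proof -
  define w where "w = exp a"
  define \<theta> where "\<theta> j = pi * (real j + 1/2) / real m" for j
  have w_pos: "w > 0" by (simp add: w_def)
  have pair: "w\<^sup>2 - 2 * w * cos (\<theta> j) + 1 = 2 * w * (cosh a - cos (\<theta> j))" for j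
    using w_pos by (simp add: w_def cosh_def field_simps power2_eq_square exp_minus)
  have "complex_of_real (w ^ (2 * m) + 1)
      = (\<Prod>j<m. complex_of_real (w\<^sup>2 - 2 * w * cos (\<theta> j) + 1))"
    using power_double_plus_one_eq_prod[OF assms, of "complex_of_real w"] by (simp add: \<theta>_def)
  hence "w ^ (2 * m) + 1 = (\<Prod>j<m. 2 * w * (cosh a - cos (\<theta> j)))"
    unfolding pair by (metis of_real_eq_iff of_real_prod)
  also have "\<dots> = w ^ m * (2 ^ m * (\<Prod>j<m. cosh a - cos (\<theta> j)))"
    by (simp add: prod.distrib power_mult_distrib)
  moreover have "w ^ (2 * m) + 1 = w ^ m * (2 * cosh (real m * a))"
    using w_pos by (simp add: w_def cosh_def exp_minus field_simps power_mult_distrib mult_exp_exp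
        flip: exp_of_nat_mult power_add mult_2)
  ultimately have "2 * cosh (real m * a) = 2 ^ m * (\<Prod>j<m. cosh a - cos (\<theta> j))"
    using w_pos by simp
  also have "(\<Prod>j<m. cosh a - cos (\<theta> j)) = (\<Prod>k=1..m. cosh a - cos (pi * (real k - 1/2) / real m))"
    by (simp add: prod.atLeast1_atMost_eq \<theta>_def add.commute)
  finally show ?thesis .
qed

lemma prod_two_cosh_eq_double_prod:
  assumes "m > 0"
    and "\<And>j. j \<in> {1..n} \<Longrightarrow> cosh (\<alpha> j) + cos (pi * (real j - 1/2) / real n) = x"
  shows "(\<Prod>j=1..n. 2 * cosh (real m * \<alpha> j))
       = 2 ^ (m * n) * (\<Prod>j=1..n. \<Prod>k=1..m.
           x - cos (pi * (real j - 1/2) / real n) - cos (pi * (real k - 1/2) / real m))"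
proof -
  have "(\<Prod>j=1..n. 2 * cosh (real m * \<alpha> j))
      = (\<Prod>j=1..n. 2 ^ m * (\<Prod>k=1..m.
           x - cos (pi * (real j - 1/2) / real n) - cos (pi * (real k - 1/2) / real m)))"
  proof (rule prod.cong[OF refl])
    fix j assume "j \<in> {1..n}"
    hence "cosh (\<alpha> j) = x - cos (pi * (real j - 1/2) / real n)" using assms(2) by force
    thus "2 * cosh (real m * \<alpha> j) = 2 ^ m * (\<Prod>k=1..m.
           x - cos (pi * (real j - 1/2) / real n) - cos (pi * (real k - 1/2) / real m))"
      using two_cosh_mult_eq_prod[OF assms(1), of "\<alpha> j"] by simp
  qed
  thus ?thesis by (simp add: prod.distrib power_mult)
qed

text \<open>The hypotheses \<open>x \<ge> 2\<close>, \<open>\<alpha> j \<ge> 0\<close> and \<open>\<beta> k \<ge> 0\<close> only pin down \<open>\<alpha>\<close> and \<open>\<beta>\<close>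
  uniquely; the identity holds for any solutions of the cosh equations.\<close>

theorem mainTheorem10:
  fixes m n :: nat and x :: real
    and \<alpha> \<beta> :: "nat \<Rightarrow> real"
  assumes "m > 0" and "n > 0" and "x \<ge> 2"
    and "\<And>j. j \<in> {1..n} \<Longrightarrow> \<alpha> j \<ge> 0"
    and "\<And>j. j \<in> {1..n} \<Longrightarrow> cosh (\<alpha> j) + cos (pi * (real j - 1/2) / real n) = x"
    and "\<And>k. k \<in> {1..m} \<Longrightarrow> \<beta> k \<ge> 0"
    and "\<And>k. k \<in> {1..m} \<Longrightarrow> cosh (\<beta> k) + cos (pi * (real k - 1/2) / real m) = x"
  shows "(\<Prod>j=1..n. 2 * cosh (real m * \<alpha> j)) = (\<Prod>k=1..m. 2 * cosh (real n * \<beta> k))"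
proof -
  let ?c = "\<lambda>j. cos (pi * (real j - 1/2) / real n)"
  let ?d = "\<lambda>k. cos (pi * (real k - 1/2) / real m)"
  have "(\<Prod>j=1..n. 2 * cosh (real m * \<alpha> j)) = 2 ^ (m * n) * (\<Prod>j=1..n. \<Prod>k=1..m. x - ?c j - ?d k)"
    using prod_two_cosh_eq_double_prod[OF assms(1) assms(5)] .
  also have "(\<Prod>j=1..n. \<Prod>k=1..m. x - ?c j - ?d k) = (\<Prod>k=1..m. \<Prod>j=1..n. x - ?d k - ?c j)"
    by (subst prod.swap) (simp add: algebra_simps)
  also have "2 ^ (m * n) * \<dots> = (\<Prod>k=1..m. 2 * cosh (real n * \<beta> k))"
    using prod_two_cosh_eq_double_prod[OF assms(2) assms(7)] by (simp add: mult.commute)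
  finally show ?thesis .
qed

end
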